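(* Assume the standing setting. Let $\epsilon>0$, fix a coarse index $j\in\mathbb Z$ and an integer $m$ with $1\le m\le r$. There exists $\delta>0$ such that if $|u^0_i-u^0_{i+1}|\le\delta$ for all $i\in\mathbb Z$, then $$|v_m-u_m|\le \tfrac32 h+\tfrac34|d_1+d_2|+\epsilon .$$
   Context: Standing setting. Let $F:\mathbb R\to\mathbb R$ be continuously differentiable. For a spatial step $\eta>0$, a time step $\tau>0$ and an initial sequence $(z^0_i)_{i\in\mathbb Z}$ of reals, the EFC (Euler forward in time, centered in space) scheme produces $(z^n_i)_{i\in\mathbb Z,\,n\in\mathbb N}$ by $z^{n+1}_i=z^n_i-F'(z^n_i)\frac{\tau}{2\eta}\,(z^n_{i+1}-z^n_{i-1})$. It satisfies the CFL condition if $|F'(z^n_i)|\,\tau/\eta\le 1$ for all $i\in\mathbb Z$, $n\in\mathbb N$. Fix $a\in\mathbb R$, $h>0$, $\Delta t>0$, an integer $N>1$ and an even integer $r\ge 2$; put $k=h/r$, $dt=\Delta t/r$, $M=Nr$. Let $u_0:\mathbb R\to\mathbb R$. The coarse solution $(w^n_j)$ is the EFC scheme with $\eta=h$, $\tau=\Delta t$, $w^0_j=u_0(a+jh)$; the fine solution $(u^n_i)$ is the EFC scheme with $\eta=k$, $\tau=dt$, $u^0_i=u_0(a+ik)$ (so $w^0_j=u^0_{jr}$). Both are assumed to satisfy the CFL condition. Coarse nodes: $x_j=a+jh$. Interpolant: for a fixed coarse index $j$, set $p_1=x_j$, $p_2=x_{j+1}$, $d_1=w^N_j$, $d_2=w^N_{j+1}$,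 let $q$ be the cubic with $q(0)=p_1$, $q(1)=p_2$, $q'(0)=d_1$, $q'(1)=d_2$, and let $v(t)=q'(t)=(6p_1-6p_2+3d_1+3d_2)t^2+(-6p_1+6p_2-4d_1-2d_2)t+d_1$ for $t\in[0,1]$. For $0\le m\le r$ put $v_m=v(m/r)$ and $u_m=u^M_{jr+m}$ (the fine solution at time step $M$ at the fine node $x_j+mk$). *)

theory Defs
  imports Complex_Main
begin

text \<open>EFC scheme (Euler forward in time, centered in space).
  Fd is the derivative F' of the flux; eta is the spatial step, tau the time step,
  z0 the initial sequence. efc Fd eta tau z0 n i is z^n_i.\<close>
fun efc :: "(real \<Rightarrow> real) \<Rightarrow> real \<Rightarrow> real \<Rightarrow> (int \<Rightarrow> real) \<Rightarrow> nat \<Rightarrow> int \<Rightarrow> real" where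
  "efc Fd eta tau z0 0 i = z0 i"
| "efc Fd eta tau z0 (Suc n) i =
     efc Fd eta tau z0 n i
     - Fd (efc Fd eta tau z0 n i) * (tau / (2 * eta))
       * (efc Fd eta tau z0 n (i + 1) - efc Fd eta tau z0 n (i - 1))"

definition cfl :: "(real \<Rightarrow> real) \<Rightarrow> real \<Rightarrow> real \<Rightarrow> (int \<Rightarrow> real) \<Rightarrow> bool" where
  "cfl Fd eta tau z0 \<longleftrightarrow> (\<forall>n i. \<bar>Fd (efc Fd eta tau z0 n i)\<bar> * tau / eta \<le> 1)"

text \<open>Derivative of the cubic Hermite interpolant q with q(0)=p1, q(1)=p2, q'(0)=d1, q'(1)=d2.\<close>
definition interp_v :: "real \<Rightarrow> real \<Rightarrow> real \<Rightarrow> real \<Rightarrow> real \<Rightarrow> real" where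
  "interp_v p1 p2 d1 d2 t =
     (6*p1 - 6*p2 + 3*d1 + 3*d2) * t^2 + (-6*p1 + 6*p2 - 4*d1 - 2*d2) * t + d1"

end

theory Submission
  imports Defs
begin

text \<open>Under the CFL condition the coefficient of the centred difference in an EFC step is at most
  1/2, so one step moves every value by at most the largest neighbour difference. Hence, if D
  bounds the initial neighbour differences, after n steps they are bounded by 3^n D and every
  value has drifted by at most n 3^n D. For initial data with neighbour differences at most \<delta>, the coarse
  values d1, d2 and the fine value u_m therefore all lie within O(\<delta>) of u0(x_j), with
  constants depending only on N and r. Finally, with s = t - t^2 \<in> [0, 1/4],
  v(t) - u = (6(p2 - p1) - 3(d1 + d2)) s + (1 - t)(d1 - u) + t(d2 - u).\<close>

lemma efc_step_bound:
  assumes cfl: "cfl Fd eta tau z0" and "eta > 0" "tau > 0"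
    and adj: "\<And>i. \<bar>efc Fd eta tau z0 n (i + 1) - efc Fd eta tau z0 n i\<bar> \<le> B"
  shows "\<bar>efc Fd eta tau z0 (Suc n) i - efc Fd eta tau z0 n i\<bar> \<le> B"
proof -
  let ?z = "efc Fd eta tau z0 n"
  have "\<bar>Fd (?z i)\<bar> * tau / eta \<le> 1" using cfl unfolding cfl_def by blast
  then have courant: "\<bar>Fd (?z i) * (tau / (2 * eta))\<bar> \<le> 1/2"
    using \<open>eta > 0\<close> \<open>tau > 0\<close> by (simp add: abs_mult field_simps)
  have "\<bar>?z (i + 1) - ?z (i - 1)\<bar> \<le> \<bar>?z (i + 1) - ?z i\<bar> + \<bar>?z (i - 1 + 1) - ?z (i - 1)\<bar>"
    by simp
  also have "\<dots> \<le> 2 * B" using adj[of i] adj[of "i - 1"] by simp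
  finally have centered: "\<bar>?z (i + 1) - ?z (i - 1)\<bar> \<le> 2 * B" .
  have "\<bar>efc Fd eta tau z0 (Suc n) i - ?z i\<bar>
      = \<bar>Fd (?z i) * (tau / (2 * eta))\<bar> * \<bar>?z (i + 1) - ?z (i - 1)\<bar>"
    by (simp add: abs_mult)
  also have "\<dots> \<le> 1/2 * (2 * B)" by (rule mult_mono[OF courant centered]) auto
  finally show ?thesis by simp
qed

lemma efc_adjacent_diff_le:
  assumes cfl: "cfl Fd eta tau z0" and "eta > 0" "tau > 0"
    and adj: "\<And>i. \<bar>z0 (i + 1) - z0 i\<bar> \<le> D"
  shows "\<bar>efc Fd eta tau z0 n (i + 1) - efc Fd eta tau z0 n i\<bar> \<le> 3 ^ n * D"
proof (induction n arbitrary: i)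
  case 0
  then show ?case using adj by simp
next
  case (Suc n)
  let ?z = "efc Fd eta tau z0 n" and ?z' = "efc Fd eta tau z0 (Suc n)"
  have "\<bar>?z' (i + 1) - ?z (i + 1)\<bar> \<le> 3 ^ n * D" "\<bar>?z' i - ?z i\<bar> \<le> 3 ^ n * D"
    using efc_step_bound[OF cfl \<open>eta > 0\<close> \<open>tau > 0\<close> Suc.IH] by blast+
  with Suc.IH[of i] show ?case by (simp del: efc.simps)
qed

lemma efc_drift_le:
  assumes cfl: "cfl Fd eta tau z0" and "eta > 0" "tau > 0"
    and adj: "\<And>i. \<bar>z0 (i + 1) - z0 i\<bar> \<le> D"
  shows "\<bar>efc Fd eta tau z0 n i - z0 i\<bar> \<le> real n * 3 ^ n * D"
proof (induction n)
  case 0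
  then show ?case by simp
next
  case (Suc n)
  have "0 \<le> D" using adj by (meson abs_ge_zero order_trans)
  have "\<bar>efc Fd eta tau z0 (Suc n) i - efc Fd eta tau z0 n i\<bar> \<le> 3 ^ n * D"
    using efc_step_bound[OF assms(1-3) efc_adjacent_diff_le[OF assms]] .
  with Suc.IH have "\<bar>efc Fd eta tau z0 (Suc n) i - z0 i\<bar> \<le> real n * 3 ^ n * D + 3 ^ n * D"
    by (simp del: efc.simps)
  also have "\<dots> \<le> real (Suc n) * 3 ^ Suc n * D"
    using \<open>0 \<le> D\<close> by (simp add: algebra_simps mult_left_mono mult_right_mono)
  finally show ?case .
qed

lemma abs_diff_le_of_adjacent_diff_le:
  fixes z :: "int \<Rightarrow> real"
  assumes adj: "\<And>i. \<bar>z (i + 1) - z i\<bar> \<le> D"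
  shows "\<bar>z i - z i'\<bar> \<le> real_of_int \<bar>i - i'\<bar> * D"
proof -
  have far: "\<bar>z (l + int p) - z l\<bar> \<le> real p * D" for l p
  proof (induction p)
    case 0
    then show ?case by simp
  next
    case (Suc p)
    have "\<bar>z (l + int p + 1) - z (l + int p)\<bar> \<le> D" by (rule adj)
    with Suc.IH show ?case by (simp add: algebra_simps)
  qed
  show ?thesis
  proof (cases "i' \<le> i")
    case True
    then show ?thesis using far[of i' "nat (i - i')"] by simp
  next
    case False
    then show ?thesis using far[of i "nat (i' - i)"] by (simp add: abs_minus_commute)
  qed
qed

lemma efc_coarse_fine_close:
  fixes z :: "int \<Rightarrow> real" and r :: nat
  assumes cfl_coarse: "cfl Fd eta tau (\<lambda>j. z (j * int r))" and "eta > 0" "tau > 0"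
    and cfl_fine: "cfl Fd eta' tau' z" and "eta' > 0" "tau' > 0"
    and adj: "\<And>i. \<bar>z (i + 1) - z i\<bar> \<le> D"
    and near: "\<bar>i - j * int r\<bar> \<le> int r"
  shows "\<bar>efc Fd eta tau (\<lambda>j. z (j * int r)) n j - efc Fd eta' tau' z n' i\<bar>
    \<le> (real n * 3 ^ n * real r + real n' * 3 ^ n' + real r) * D"
proof -
  have "0 \<le> D" using adj by (meson abs_ge_zero order_trans)
  have adj_coarse: "\<bar>z ((j + 1) * int r) - z (j * int r)\<bar> \<le> real r * D" for j
    using abs_diff_le_of_adjacent_diff_le[where z=z, OF adj, of "(j + 1) * int r" "j * int r"]
    by (simp add: algebra_simps)
  have "real_of_int \<bar>i - j * int r\<bar> \<le> real r"
    using near by (metis of_int_le_iff of_int_of_nat_eq)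
  then have initial: "\<bar>z (j * int r) - z i\<bar> \<le> real r * D"
    using abs_diff_le_of_adjacent_diff_le[where z=z, OF adj, of "j * int r" i] \<open>0 \<le> D\<close>
    by (simp add: abs_minus_commute) (meson mult_right_mono order_trans)
  have coarse: "\<bar>efc Fd eta tau (\<lambda>j. z (j * int r)) n j - z (j * int r)\<bar>
      \<le> real n * 3 ^ n * (real r * D)"
    using efc_drift_le[OF cfl_coarse \<open>eta > 0\<close> \<open>tau > 0\<close> adj_coarse] by simp
  have fine: "\<bar>z i - efc Fd eta' tau' z n' i\<bar> \<le> real n' * 3 ^ n' * D"
    using efc_drift_le[OF cfl_fine \<open>eta' > 0\<close> \<open>tau' > 0\<close> adj] by (simp add: abs_minus_commute)
  from coarse initial fine show ?thesis by (simp add: algebra_simps)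
qed

lemma interp_v_minus_eq:
  "interp_v p1 p2 d1 d2 t - u
    = (6 * (p2 - p1) - 3 * (d1 + d2)) * (t - t\<^sup>2) + ((1 - t) * (d1 - u) + t * (d2 - u))"
  unfolding interp_v_def by (simp add: algebra_simps power2_eq_square)

lemma interp_v_dist_le:
  assumes "0 \<le> t" "t \<le> 1" and "\<bar>d1 - u\<bar> \<le> e" "\<bar>d2 - u\<bar> \<le> e"
  shows "\<bar>interp_v p1 p2 d1 d2 t - u\<bar> \<le> 3/2 * \<bar>p2 - p1\<bar> + 3/4 * \<bar>d1 + d2\<bar> + e"
proof -
  have "0 \<le> t - t\<^sup>2" using assms(1,2) by (simp add: power2_eq_square mult_left_le_one_le)
  moreover have "t - t\<^sup>2 \<le> 1/4"
    using zero_le_power2[of "t - 1/2"] by (simp add: power2_eq_square algebra_simps)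
  moreover have "\<bar>6 * (p2 - p1) - 3 * (d1 + d2)\<bar> \<le> 6 * \<bar>p2 - p1\<bar> + 3 * \<bar>d1 + d2\<bar>"
    by (simp add: abs_if)
  ultimately have "\<bar>(6 * (p2 - p1) - 3 * (d1 + d2)) * (t - t\<^sup>2)\<bar>
      \<le> (6 * \<bar>p2 - p1\<bar> + 3 * \<bar>d1 + d2\<bar>) * (1/4)"
    unfolding abs_mult by (intro mult_mono) auto
  moreover have "\<bar>(1 - t) * (d1 - u) + t * (d2 - u)\<bar> \<le> (1 - t) * e + t * e"
    using assms by (intro order_trans[OF abs_triangle_ineq] add_mono)
      (simp_all add: abs_mult mult_left_mono)
  ultimately show ?thesis
    unfolding interp_v_minus_eq by (simp add: algebra_simps abs_triangle_ineq)
qed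

theorem corollary3:
  fixes F Fd :: "real \<Rightarrow> real" and a h \<Delta>t \<epsilon> :: real and N r m :: nat and j :: int
  assumes F_deriv: "\<And>x. (F has_real_derivative Fd x) (at x)"
    and Fd_cont: "continuous_on UNIV Fd"
    and h_pos: "h > 0" and dt_pos: "\<Delta>t > 0"
    and N_gt: "N > 1" and r_even: "even r" and r_ge: "r \<ge> 2"
    and eps_pos: "\<epsilon> > 0"
    and m_ge: "1 \<le> m" and m_le: "m \<le> r"
  shows "\<exists>\<delta>>0. \<forall>u0 :: real \<Rightarrow> real.
    (let k = h / real r; dt = \<Delta>t / real r; M = N * r;
         w = efc Fd h \<Delta>t (\<lambda>jj. u0 (a + real_of_int jj * h));
         u = efc Fd k dt (\<lambda>i. u0 (a + real_of_int i * k));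
         p1 = a + real_of_int j * h; p2 = a + real_of_int (j + 1) * h;
         d1 = w N j; d2 = w N (j + 1);
         v_m = interp_v p1 p2 d1 d2 (real m / real r);
         u_m = u M (j * int r + int m)
     in (cfl Fd h \<Delta>t (\<lambda>jj. u0 (a + real_of_int jj * h))
         \<and> cfl Fd k dt (\<lambda>i. u0 (a + real_of_int i * k))
         \<and> (\<forall>i::int. \<bar>u0 (a + real_of_int i * k) - u0 (a + real_of_int (i + 1) * k)\<bar> \<le> \<delta>))
        \<longrightarrow> \<bar>v_m - u_m\<bar> \<le> 3/2 * h + 3/4 * \<bar>d1 + d2\<bar> + \<epsilon>)"
proof -
  define K where "K = real N * 3 ^ N * real r + real (N * r) * 3 ^ (N * r) + real r"
  have "K > 0" using r_ge unfolding K_def by (simp add: add_nonneg_pos)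
  show ?thesis
    unfolding Let_def
  proof (intro exI[of _ "\<epsilon> / K"] conjI allI impI, goal_cases)
    case 1
    show ?case using \<open>K > 0\<close> eps_pos by simp
  next
    case (2 u0)
    define z where "z i = u0 (a + real_of_int i * (h / real r))" for i
    have coarse: "(\<lambda>j. u0 (a + real_of_int j * h)) = (\<lambda>j. z (j * int r))"
      using r_ge by (simp add: z_def)
    have cfl_coarse: "cfl Fd h \<Delta>t (\<lambda>j. z (j * int r))"
      and cfl_fine: "cfl Fd (h / real r) (\<Delta>t / real r) z"
      and adj: "\<And>i. \<bar>z (i + 1) - z i\<bar> \<le> \<epsilon> / K"
      using 2 unfolding coarse z_def[abs_def] by (simp_all add: abs_minus_commute)
    have close: "\<bar>efc Fd h \<Delta>t (\<lambda>j. z (j * int r)) N j'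
        - efc Fd (h / real r) (\<Delta>t / real r) z (N * r) (j * int r + int m)\<bar> \<le> \<epsilon>"
      if "\<bar>j * int r + int m - j' * int r\<bar> \<le> int r" for j'
      using efc_coarse_fine_close[where n = N and n' = "N * r",
          OF cfl_coarse _ _ cfl_fine _ _ adj that] h_pos dt_pos r_ge \<open>K > 0\<close>
      unfolding K_def by simp
    have "0 \<le> real m / real r" "real m / real r \<le> 1"
      using m_le r_ge by (simp_all add: divide_le_eq_1)
    from interp_v_dist_le[where ?p1.0 = "a + real_of_int j * h"
        and ?p2.0 = "a + real_of_int (j + 1) * h", OF this close[of j] close[of "j + 1"]] m_le
    show ?case
      unfolding coarse z_def[abs_def, symmetric] using h_pos by (simp add: algebra_simps)
  qed
qed

end
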